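(* Let $F$ be an $\omega$-bounded surface with a Nyikos decomposition $F=K\cup\bigcup_{i=1}^n P_i$, where each closed long pipe is written $P_i=\bigcup_{\alpha<\omega_1}U_{i,\alpha}$ as in the definition of closed long pipe, and let $h_t:F\to F$, $t\in[0,1]$, be an isotopy of homeomorphisms. Then $$\Big\{\alpha<\omega_1 \;:\; h_t\Big(K\cup\bigcup_{i=1}^n\bigcup_{\beta<\alpha}U_{i,\beta}\Big)=K\cup\bigcup_{i=1}^n\bigcup_{\beta<\alpha}U_{i,\beta}\text{ for all } t\in[0,1]\Big\}$$ is a closed unbounded subset of $\omega_1$.
   Context: A surface is a connected Hausdorff space locally homeomorphic to $\mathbb{R}^2$ (possibly with boundary where indicated). A space is $\omega$-bounded if every countable subset has compact closure. A (closed) long pipe is a surface $P$ with boundary homeomorphic to $\mathbb{S}^1$ such that $P=\bigcup_{\alpha<\omega_1}U_\alpha$, where each $U_\alpha$ is an open subset of $P$ containing $\partial P$ and homeomorphic to $\mathbb{S}^1\times[0,\infty)$, and whenever $\alpha<\beta$ we have $\overline{U_\alpha}\subset U_\beta$ and the boundary of $U_\alpha$ in $U_\beta$ is homeomorphic to $\mathbb{S}^1$. A Nyikos decomposition of an $\omega$-bounded surface $F$ is an expression $F=K\cup\bigcup_{i=1}^nP_i$ where $K$ is a compact surface with $n$ boundary circles, $P_1,\dots,P_n$ are pairwise disjoint closed long pipes, and each $P_i$ meets $K$ exactly in $\partial P_i$, which is a boundary component of $K$ (distinct pipes attached along distinct boundary components). An isotopy of homeomorphisms is a continuous $H:F\times[0,1]\to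 F$ with each $h_t=H(\cdot,t)$ a homeomorphism. *)

theory Defs
  imports "HOL-Analysis.Analysis"
begin

definition S1 :: "(real \<times> real) set" where
  "S1 = sphere 0 1"

definition halfplane :: "(real \<times> real) set" where
  "halfplane = {p. snd p \<ge> 0}"

definition surface :: "'a topology \<Rightarrow> bool" where
  "surface X \<longleftrightarrow> connected_space X \<and> Hausdorff_space X \<and>
     (\<forall>x\<in>topspace X. \<exists>W. openin X W \<and> x \<in> W \<and>
        (\<exists>V::(real \<times> real) set. open V \<and> subtopology X W homeomorphic_space top_of_set V))"

definition surface_wb :: "'a topology \<Rightarrow> bool" where
  "surface_wb X \<longleftrightarrow> connected_space X \<and> Hausdorff_space X \<and>
     (\<forall>x\<in>topspace X. \<exists>W. openin X W \<and> x \<in> W \<and>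
        (\<exists>V. openin (top_of_set halfplane) V \<and> subtopology X W homeomorphic_space top_of_set V))"

definition mbdry :: "'a topology \<Rightarrow> 'a set" where
  "mbdry X = {x \<in> topspace X. \<not> (\<exists>W. openin X W \<and> x \<in> W \<and>
        (\<exists>V::(real \<times> real) set. open V \<and> subtopology X W homeomorphic_space top_of_set V))}"

definition omega_bounded :: "'a topology \<Rightarrow> bool" where
  "omega_bounded X \<longleftrightarrow> (\<forall>S. S \<subseteq> topspace X \<and> countable S \<longrightarrow> compactin X (X closure_of S))"

text \<open>A well-ordered type is (order-isomorphic to) omega_1 iff it is uncountable and all
  its proper initial segments are countable.\<close>
definition omega1_type :: "('w::wellorder) itself \<Rightarrow> bool" where
  "omega1_type (T::'w itself) \<longleftrightarrow>
     \<not> countable (UNIV :: 'w set) \<and> (\<forall>a::'w. countable {b. b < a})"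

definition club :: "('w::wellorder) set \<Rightarrow> bool" where
  "club C \<longleftrightarrow> (\<forall>a. \<exists>b\<in>C. a \<le> b) \<and>
     (\<forall>S. S \<subseteq> C \<and> S \<noteq> {} \<and> (\<exists>u. \<forall>s\<in>S. s \<le> u) \<longrightarrow> (LEAST u. \<forall>s\<in>S. s \<le> u) \<in> C)"

definition long_pipe :: "'a topology \<Rightarrow> 'a set \<Rightarrow> ('w::wellorder \<Rightarrow> 'a set) \<Rightarrow> bool" where
  "long_pipe X P U \<longleftrightarrow>
     P \<subseteq> topspace X \<and> surface_wb (subtopology X P) \<and>
     subtopology X (mbdry (subtopology X P)) homeomorphic_space top_of_set S1 \<and>
     P = (\<Union>a. U a) \<and>
     (\<forall>a. openin (subtopology X P) (U a) \<and> mbdry (subtopology X P) \<subseteq> U a \<and>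
          subtopology X (U a) homeomorphic_space
            prod_topology (top_of_set S1) (top_of_set {0::real..})) \<and>
     (\<forall>a b. a < b \<longrightarrow> (subtopology X P) closure_of (U a) \<subseteq> U b \<and>
          subtopology X ((subtopology X (U b)) frontier_of (U a))
            homeomorphic_space top_of_set S1)"

definition nyikos_decomp ::
  "'a topology \<Rightarrow> 'a set \<Rightarrow> nat \<Rightarrow> (nat \<Rightarrow> 'a set) \<Rightarrow> (nat \<Rightarrow> 'w::wellorder \<Rightarrow> 'a set) \<Rightarrow> bool" where
  "nyikos_decomp F K n P U \<longleftrightarrow>
     K \<subseteq> topspace F \<and> topspace F = K \<union> (\<Union>i\<in>{1..n}. P i) \<and>
     compact_space (subtopology F K) \<and> surface_wb (subtopology F K) \<and>
     finite (connected_components_of (subtopology F (mbdry (subtopology F K)))) \<and>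
     card (connected_components_of (subtopology F (mbdry (subtopology F K)))) = n \<and>
     (\<forall>C \<in> connected_components_of (subtopology F (mbdry (subtopology F K))).
         subtopology F C homeomorphic_space top_of_set S1) \<and>
     (\<forall>i\<in>{1..n}. long_pipe F (P i) (U i)) \<and>
     (\<forall>i\<in>{1..n}. \<forall>j\<in>{1..n}. i \<noteq> j \<longrightarrow> P i \<inter> P j = {}) \<and>
     (\<forall>i\<in>{1..n}. P i \<inter> K = mbdry (subtopology F (P i)) \<and>
         mbdry (subtopology F (P i)) \<in> connected_components_of (subtopology F (mbdry (subtopology F K)))) \<and>
     inj_on (\<lambda>i. mbdry (subtopology F (P i))) {1..n}"

definition isotopy :: "'a topology \<Rightarrow> ('a \<times> real \<Rightarrow> 'a) \<Rightarrow> bool" where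
  "isotopy F H \<longleftrightarrow>
     continuous_map (prod_topology F (top_of_set {0..1})) F H \<and>
     (\<forall>t\<in>{0..1}. homeomorphic_map F F (\<lambda>x. H (x, t)))"

end

theory Submission
  imports Defs
begin

text \<open>
  For a well-ordered index type (of order type \<open>\<omega>\<^sub>1\<close>) write
  \<open>level K V a = K \<union> (\<Union>b<a. V b)\<close>; for the decomposition take \<open>V b = \<Union>i. U i b\<close>.

  Suppose \<open>F\<close> is covered by
  the open stages \<open>K \<union> V b\<close>, increasing in \<open>b\<close>, each contained in a compact set.  Then every
  compact set, and indeed every countable family of compact sets, lies in one level.  Given an
  isotopy \<open>h\<^sub>t\<close>, this yields \<open>a\<^sub>0 < a\<^sub>1 < \<dots>\<close> such that every \<open>h\<^sub>t\<close> maps level \<open>a\<^sub>k\<close> into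
  level \<open>a\<^sub>k\<^sub>+\<^sub>1\<close> and so does \<open>h\<^sub>q\<^sup>-\<^sup>1\<close> for every rational \<open>q\<close> (sweeps and preimages of compact
  sets are compact).  At the supremum \<open>l\<close> the level is open and mapped into itself by all \<open>h\<^sub>t\<close>
  and by the rational \<open>h\<^sub>q\<^sup>-\<^sup>1\<close>; continuity in \<open>t\<close> and density of the rationals make it invariant.
  Closedness holds because levels commute with suprema and images commute with unions.

  Part 2 is the geometric input: every stage \<open>K \<union> (\<Union>i. U i b)\<close> is open in \<open>F\<close>.  Interior
  points of the core or of a pipe have planar neighbourhoods, open in \<open>F\<close> by invariance of
  domain.  At a seam point (on the boundary circle shared by a pipe and the core) a half-disc
  chart of the pipe is glued to a half-plane chart of the core reflected along the seam; this
  gives a continuous injective map of an open square into \<open>F\<close>, whose image is open, again by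
  invariance of domain.  The stages are relatively compact: each \<open>U i b\<close> is separable and \<open>F\<close>
  is \<open>\<omega>\<close>-bounded.
\<close>

text \<open>Countable sets of indices are bounded in \<open>\<omega>\<^sub>1\<close>: a countable union of countable initial
  segments is countable, hence not the whole type.\<close>
lemma omega1_countable_bounded:
  fixes S :: "'w::wellorder set"
  assumes "omega1_type TYPE('w)" and "countable S"
  shows "\<exists>u. \<forall>s\<in>S. s < u"
proof -
  have "countable (\<Union>s\<in>S. insert s {b. b < s})"
    using assms unfolding omega1_type_def by auto
  moreover have "\<not> countable (UNIV::'w set)"
    using assms(1) unfolding omega1_type_def by simp
  ultimately obtain u where "u \<notin> (\<Union>s\<in>S. insert s {b. b < s})"
    by (metis UNIV_I countable_subset subsetI)
  then have "s < u" if "s \<in> S" for s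
    using that by (auto simp: not_less_iff_gr_or_eq)
  then show ?thesis
    by blast
qed

text \<open>The least upper bound of a bounded set of indices (the form in which limit points occur in
  the definition of a club) bounds the set, and everything below it is below some element.\<close>
lemma Least_upper_bound:
  fixes S :: "'w::wellorder set"
  assumes "\<exists>u. \<forall>s\<in>S. s \<le> u"
  shows Least_upper_bound_ge: "\<And>s. s \<in> S \<Longrightarrow> s \<le> (LEAST u. \<forall>s\<in>S. s \<le> u)"
    and Least_upper_bound_approx: "\<And>b. b < (LEAST u. \<forall>s\<in>S. s \<le> u) \<Longrightarrow> \<exists>s\<in>S. b < s"
proof -
  show "\<And>s. s \<in> S \<Longrightarrow> s \<le> (LEAST u. \<forall>s\<in>S. s \<le> u)"
    using LeastI_ex[OF assms] by blast
  show "\<exists>s\<in>S. b < s" if "b < (LEAST u. \<forall>s\<in>S. s \<le> u)" for b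
    using that not_less_Least[of b "\<lambda>u. \<forall>s\<in>S. s \<le> u"] by (auto simp: not_le)
qed

definition level :: "'a set \<Rightarrow> ('w::wellorder \<Rightarrow> 'a set) \<Rightarrow> 'w \<Rightarrow> 'a set" where
  "level K V a = K \<union> (\<Union>b\<in>{b. b < a}. V b)"

lemma level_mono: "a \<le> a' \<Longrightarrow> level K V a \<subseteq> level K V a'"
  unfolding level_def by (intro Un_mono subset_refl UN_mono) auto

lemma level_Sup:
  fixes S :: "'w::wellorder set"
  assumes "S \<noteq> {}" and "\<exists>u. \<forall>s\<in>S. s \<le> u"
  shows "level K V (LEAST u. \<forall>s\<in>S. s \<le> u) = (\<Union>s\<in>S. level K V s)"
proof
  show "level K V (LEAST u. \<forall>s\<in>S. s \<le> u) \<subseteq> (\<Union>s\<in>S. level K V s)"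
  proof
    fix x
    assume "x \<in> level K V (LEAST u. \<forall>s\<in>S. s \<le> u)"
    then consider "x \<in> K" | b where "b < (LEAST u. \<forall>s\<in>S. s \<le> u)" "x \<in> V b"
      unfolding level_def by blast
    then show "x \<in> (\<Union>s\<in>S. level K V s)"
    proof cases
      case 1
      then show ?thesis
        using assms(1) unfolding level_def by blast
    next
      case (2 b)
      then obtain s where "s \<in> S" "b < s"
        using Least_upper_bound_approx[OF assms(2)] by blast
      then show ?thesis
        using 2(2) unfolding level_def by blast
    qed
  qed
  show "(\<Union>s\<in>S. level K V s) \<subseteq> level K V (LEAST u. \<forall>s\<in>S. s \<le> u)"
    using level_mono Least_upper_bound_ge[OF assms(2)] by (meson UN_least)
qed

definition isotopy_invariant :: "('a \<times> real \<Rightarrow> 'a) \<Rightarrow> 'a set \<Rightarrow> bool" where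
  "isotopy_invariant H X \<longleftrightarrow> (\<forall>t\<in>{0..1}. (\<lambda>x. H (x, t)) ` X = X)"

lemma isotopy_invariant_UN:
  assumes "\<And>s. s \<in> S \<Longrightarrow> isotopy_invariant H (X s)"
  shows "isotopy_invariant H (\<Union>s\<in>S. X s)"
  using assms unfolding isotopy_invariant_def image_UN by simp

lemma isotopyD:
  assumes "isotopy F H"
  shows isotopy_continuous: "continuous_map (prod_topology F (top_of_set {0..1})) F H"
    and isotopy_homeomorphic: "\<And>t. t \<in> {0..1} \<Longrightarrow> homeomorphic_map F F (\<lambda>x. H (x, t))"
  using assms unfolding isotopy_def by auto

lemma isotopy_track_continuous:
  assumes "isotopy F H" and "y \<in> topspace F"
  shows "continuous_map (top_of_set {0..1}) F (\<lambda>t. H (y, t))"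
proof -
  have "continuous_map (top_of_set {0..1::real}) (prod_topology F (top_of_set {0..1})) (\<lambda>t. (y, t))"
    using assms(2) by (simp add: continuous_map_pairwise o_def)
  then show ?thesis
    using continuous_map_compose[OF _ isotopy_continuous[OF assms(1)]] by (simp add: o_def)
qed

lemma isotopy_sweep_compact:
  assumes "isotopy F H" and "compactin F C"
  shows "compactin F (H ` (C \<times> {0..1}))"
proof -
  have "compactin (top_of_set {0..1::real}) {0..1}"
    by (simp add: compactin_subtopology compactin_euclidean_iff)
  then have "compactin (prod_topology F (top_of_set {0..1::real})) (C \<times> {0..1})"
    using assms(2) by (simp add: compactin_Times)
  then show ?thesis
    using image_compactin isotopy_continuous[OF assms(1)] by blast
qed

lemma isotopy_preimage_compact:
  assumes "isotopy F H" and "compactin F C" and "t \<in> {0..1}"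
  shows "compactin F {y \<in> topspace F. H (y, t) \<in> C}"
proof -
  have hom: "homeomorphic_map F F (\<lambda>x. H (x, t))"
    by (rule isotopy_homeomorphic[OF assms(1,3)])
  have "(\<lambda>x. H (x, t)) ` topspace F = topspace F"
    using homeomorphic_imp_surjective_map[OF hom] .
  then have "(\<lambda>x. H (x, t)) ` {y \<in> topspace F. H (y, t) \<in> C} = C"
    using compactin_subset_topspace[OF assms(2)] by auto
  then show ?thesis
    using homeomorphic_map_compactness[OF hom, of "{y \<in> topspace F. H (y, t) \<in> C}"] assms(2)
    by simp
qed

lemma rational_in_openin_unit_interval:
  fixes t :: real
  assumes "openin (top_of_set {0..1}) T" and "t \<in> T"
  obtains q where "q \<in> \<rat> \<inter> {0..1}" and "q \<in> T"
proof -
  obtain Ob where Ob: "open Ob" "T = {0..1} \<inter> Ob"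
    using assms(1) by (auto simp: openin_open)
  then obtain \<delta> where \<delta>: "\<delta> > 0" "ball t \<delta> \<subseteq> Ob"
    using Ob assms(2) open_contains_ball by blast
  have "max 0 (t - \<delta>) < min 1 (t + \<delta>)"
    using assms(2) Ob(2) \<delta>(1) by auto
  then obtain q where q: "q \<in> \<rat>" "max 0 (t - \<delta>) < q" "q < min 1 (t + \<delta>)"
    using Rats_dense_in_real by blast
  then have "q \<in> Ob"
    using \<delta>(2) by (auto simp: dist_real_def)
  then show thesis
    using q Ob(2) by (intro that[of q]) auto
qed

text \<open>An open set \<open>W\<close> mapped into itself by every \<open>h\<^sub>t\<close> and pulled back
  into itself by \<open>h\<^sub>q\<close> for every rational \<open>q\<close> is invariant: if \<open>x = h\<^sub>t y\<close> with \<open>x \<in> W\<close>, the times \<open>q\<close>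
  with \<open>h\<^sub>q y \<in> W\<close> form a relatively open set containing \<open>t\<close>, hence contain a rational.\<close>
lemma isotopy_invariant_if_rationally_invariant:
  assumes iso: "isotopy F H" and W: "openin F W"
    and fwd: "\<And>x t. x \<in> W \<Longrightarrow> t \<in> {0..1} \<Longrightarrow> H (x, t) \<in> W"
    and bwd: "\<And>y q. y \<in> topspace F \<Longrightarrow> q \<in> \<rat> \<inter> {0..1} \<Longrightarrow> H (y, q) \<in> W \<Longrightarrow> y \<in> W"
  shows "isotopy_invariant H W"
  unfolding isotopy_invariant_def
proof (intro ballI subset_antisym subsetI)
  fix t :: real
  assume t: "t \<in> {0..1}"
  show "z \<in> W" if "z \<in> (\<lambda>x. H (x, t)) ` W" for z
    using that fwd[OF _ t] by blast
  show "x \<in> (\<lambda>x. H (x, t)) ` W" if x: "x \<in> W" for x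
  proof -
    have "(\<lambda>x. H (x, t)) ` topspace F = topspace F"
      using homeomorphic_imp_surjective_map[OF isotopy_homeomorphic[OF iso t]] .
    then have "x \<in> (\<lambda>x. H (x, t)) ` topspace F"
      using x openin_subset[OF W] by auto
    then obtain y where y: "y \<in> topspace F" "x = H (y, t)"
      by blast
    have "openin (top_of_set {0..1}) {q \<in> {0..1}. H (y, q) \<in> W}"
      using openin_continuous_map_preimage[OF isotopy_track_continuous[OF iso y(1)] W] by simp
    moreover have "t \<in> {q \<in> {0..1}. H (y, q) \<in> W}"
      using t x y(2) by simp
    ultimately obtain q where "q \<in> \<rat> \<inter> {0..1}" "H (y, q) \<in> W"
      by (rule rational_in_openin_unit_interval) auto
    then have "y \<in> W"
      using bwd y(1) by blast
    then show ?thesis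
      using y(2) by (rule rev_image_eqI)
  qed
qed

locale omega1_exhaustion =
  fixes F :: "'a topology" and K :: "'a set" and V :: "'w::wellorder \<Rightarrow> 'a set"
  assumes omega1: "omega1_type TYPE('w)"
    and open_stage: "\<And>b. openin F (K \<union> V b)"
    and mono_stage: "\<And>a b. a \<le> b \<Longrightarrow> V a \<subseteq> V b"
    and covers: "topspace F \<subseteq> (\<Union>b. K \<union> V b)"
    and relatively_compact_stage: "\<And>b. \<exists>C. compactin F C \<and> K \<union> V b \<subseteq> C"
begin

text \<open>Every level above the first is a union of open stages.\<close>
lemma level_open:
  assumes "b < a"
  shows "openin F (level K V a)"
proof -
  have "level K V a = (\<Union>c\<in>{c. c < a}. K \<union> V c)"
    using assms unfolding level_def by blast
  moreover have "openin F (\<Union>c\<in>{c. c < a}. K \<union> V c)"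
    by (intro openin_Union) (auto intro: open_stage)
  ultimately show ?thesis
    by simp
qed

text \<open>Every level lies in a single stage, hence in a compact set.\<close>
lemma level_relatively_compact: "\<exists>C. compactin F C \<and> level K V a \<subseteq> C"
proof -
  have "level K V a \<subseteq> K \<union> V a"
    using mono_stage unfolding level_def by (auto dest: less_imp_le)
  then show ?thesis
    using relatively_compact_stage by blast
qed

text \<open>A compact set is covered by finitely many stages, which lie below a common index.\<close>
lemma compact_subset_level:
  assumes "compactin F C"
  shows "\<exists>a. C \<subseteq> level K V a"
proof -
  have cover: "C \<subseteq> \<Union>(range (\<lambda>b. K \<union> V b))"
    using compactin_subset_topspace[OF assms] covers by blast
  have "\<forall>W\<in>range (\<lambda>b. K \<union> V b). openin F W"
    using open_stage by blast
  then obtain \<V> where \<V>: "finite \<V>" "\<V> \<subseteq> range (\<lambda>b. K \<union> V b)" "C \<subseteq> \<Union>\<V>"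
    using assms cover unfolding compactin_def by blast
  then obtain B where B: "finite B" "\<V> = (\<lambda>b. K \<union> V b) ` B"
    using finite_subset_image by metis
  obtain u where "\<forall>b\<in>B. b < u"
    using omega1_countable_bounded[OF omega1 countable_finite[OF B(1)]] by blast
  then have "\<Union>\<V> \<subseteq> level K V u"
    unfolding B(2) level_def by blast
  with \<V>(3) show ?thesis
    by blast
qed

lemma countable_compacts_subset_level:
  assumes "countable \<C>" and "\<And>C. C \<in> \<C> \<Longrightarrow> compactin F C"
  shows "\<exists>g. a < g \<and> (\<forall>C\<in>\<C>. C \<subseteq> level K V g)"
proof -
  have "\<forall>C\<in>\<C>. \<exists>a. C \<subseteq> level K V a"
    using compact_subset_level assms(2) by metis
  then obtain lev where lev: "\<And>C. C \<in> \<C> \<Longrightarrow> C \<subseteq> level K V (lev C)"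
    by (metis bchoice)
  have "countable (insert a (lev ` \<C>))"
    using assms(1) by simp
  then obtain g where g: "\<forall>s\<in>insert a (lev ` \<C>). s < g"
    using omega1_countable_bounded[OF omega1] by blast
  have "C \<subseteq> level K V g" if "C \<in> \<C>" for C
  proof -
    have "lev C \<le> g"
      using g that by (simp add: less_imp_le)
    then have "level K V (lev C) \<subseteq> level K V g"
      by (rule level_mono)
    then show ?thesis
      using lev[OF that] by blast
  qed
  moreover have "a < g"
    using g by blast
  ultimately show ?thesis
    by blast
qed

definition absorbs :: "('a \<times> real \<Rightarrow> 'a) \<Rightarrow> 'w \<Rightarrow> 'w \<Rightarrow> bool" where
  "absorbs H b g \<longleftrightarrow> b < g \<and>
     (\<forall>x\<in>level K V b. \<forall>t\<in>{0..1}. H (x, t) \<in> level K V g) \<and>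
     (\<forall>y\<in>topspace F. \<forall>q\<in>\<rat> \<inter> {0..1}. H (y, q) \<in> level K V b \<longrightarrow> y \<in> level K V g)"

text \<open>Every level is absorbed by a higher one: the sweep of a compact set containing it and its
  countably many preimages under the \<open>h\<^sub>q\<close>, \<open>q\<close> rational, are compact and lie in a common level.\<close>
lemma absorbing_level_exists:
  assumes iso: "isotopy F H"
  shows "\<exists>g. absorbs H a g"
proof -
  obtain C where C: "compactin F C" "level K V a \<subseteq> C"
    using level_relatively_compact by blast
  define \<C> where "\<C> = insert (H ` (C \<times> {0..1}))
                          ((\<lambda>q. {y \<in> topspace F. H (y, q) \<in> C}) ` (\<rat> \<inter> {0..1}))"
  have "countable \<C>"
    unfolding \<C>_def by (simp add: countable_rat countable_Int1)
  moreover have "\<And>D. D \<in> \<C> \<Longrightarrow> compactin F D"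
    unfolding \<C>_def
    using isotopy_sweep_compact[OF iso C(1)] isotopy_preimage_compact[OF iso C(1)] by auto
  ultimately obtain g where g: "a < g" "\<And>D. D \<in> \<C> \<Longrightarrow> D \<subseteq> level K V g"
    using countable_compacts_subset_level[of \<C> a] by blast
  have "H (x, t) \<in> level K V g" if "x \<in> level K V a" "t \<in> {0..1}" for x t
  proof -
    have "H (x, t) \<in> H ` (C \<times> {0..1})"
      using that C(2) by blast
    then show ?thesis
      using g(2) unfolding \<C>_def by blast
  qed
  moreover have "y \<in> level K V g"
    if "y \<in> topspace F" "q \<in> \<rat> \<inter> {0..1}" "H (y, q) \<in> level K V a" for y q
  proof -
    have "y \<in> {y \<in> topspace F. H (y, q) \<in> C}"
      using that(1,3) C(2) by blast
    then show ?thesis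
      using g(2) that(2) unfolding \<C>_def by blast
  qed
  ultimately have "absorbs H a g"
    unfolding absorbs_def using g(1) by blast
  then show ?thesis ..
qed

lemma absorbing_chain_invariant:
  assumes iso: "isotopy F H" and chain: "\<And>k. absorbs H (seq k) (seq (Suc k))"
  shows "\<exists>u. \<forall>k. seq k \<le> u"
    and "isotopy_invariant H (level K V (LEAST u. \<forall>s\<in>range seq. s \<le> u))"
proof -
  have "countable (range seq)"
    by simp
  then obtain u where "\<forall>s\<in>range seq. s < u"
    using omega1_countable_bounded[OF omega1] by blast
  then have bounded: "\<exists>u. \<forall>s\<in>range seq. s \<le> u"
    by (meson less_imp_le)
  then show "\<exists>u. \<forall>k. seq k \<le> u"
    by simp
  define l where "l = (LEAST u. \<forall>s\<in>range seq. s \<le> u)"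
  have l_eq: "level K V l = (\<Union>k. level K V (seq k))"
    unfolding l_def using level_Sup[OF _ bounded] by simp
  have "seq 0 < seq 1"
    using chain[of 0] unfolding absorbs_def by simp
  also have "seq 1 \<le> l"
    unfolding l_def by (rule Least_upper_bound_ge[OF bounded]) simp
  finally have "openin F (level K V l)"
    by (rule level_open)
  then show "isotopy_invariant H (level K V l)"
  proof (rule isotopy_invariant_if_rationally_invariant[OF iso])
    fix x and t :: real
    assume "x \<in> level K V l" "t \<in> {0..1}"
    then obtain k where "x \<in> level K V (seq k)"
      unfolding l_eq by blast
    then have "H (x, t) \<in> level K V (seq (Suc k))"
      using chain[of k] \<open>t \<in> {0..1}\<close> unfolding absorbs_def by blast
    then show "H (x, t) \<in> level K V l"
      unfolding l_eq by blast
  next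
    fix y q
    assume "y \<in> topspace F" "q \<in> \<rat> \<inter> {0..1}" "H (y, q) \<in> level K V l"
    then obtain k where "H (y, q) \<in> level K V (seq k)"
      unfolding l_eq by blast
    then have "y \<in> level K V (seq (Suc k))"
      using chain[of k] \<open>y \<in> topspace F\<close> \<open>q \<in> \<rat> \<inter> {0..1}\<close> unfolding absorbs_def by blast
    then show "y \<in> level K V l"
      unfolding l_eq by blast
  qed
qed

text \<open>Iterating absorption \<open>\<omega>\<close> times from \<open>a\<close> gives an invariant level above \<open>a\<close>.\<close>
lemma isotopy_invariant_levels_unbounded:
  assumes iso: "isotopy F H"
  shows "\<exists>g. a \<le> g \<and> isotopy_invariant H (level K V g)"
proof -
  define seq where "seq k = ((\<lambda>b. SOME g. absorbs H b g) ^^ k) a" for k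
  have chain: "absorbs H (seq k) (seq (Suc k))" for k
    using someI_ex[OF absorbing_level_exists[OF iso]] unfolding seq_def by simp
  note sup = absorbing_chain_invariant[where seq = seq, OF iso chain]
  have "\<exists>u. \<forall>s\<in>range seq. s \<le> u"
    using sup(1) by simp
  then have "seq 0 \<le> (LEAST u. \<forall>s\<in>range seq. s \<le> u)"
    by (rule Least_upper_bound_ge) simp
  moreover have "seq 0 = a"
    unfolding seq_def by simp
  ultimately have "a \<le> (LEAST u. \<forall>s\<in>range seq. s \<le> u)"
    by simp
  with sup(2) show ?thesis
    by blast
qed

lemma isotopy_invariant_levels_closed:
  assumes "S \<noteq> {}" and "\<exists>u. \<forall>s\<in>S. s \<le> u"
    and "\<And>s. s \<in> S \<Longrightarrow> isotopy_invariant H (level K V s)"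
  shows "isotopy_invariant H (level K V (LEAST u. \<forall>s\<in>S. s \<le> u))"
  unfolding level_Sup[OF assms(1,2)] using assms(3) by (rule isotopy_invariant_UN)

theorem club_isotopy_invariant_levels:
  assumes "isotopy F H"
  shows "club {a. isotopy_invariant H (level K V a)}"
  unfolding club_def
proof (intro conjI allI impI)
  show "\<exists>g\<in>{a. isotopy_invariant H (level K V a)}. a \<le> g" for a
    using isotopy_invariant_levels_unbounded[OF assms, of a] by blast
  show "(LEAST u. \<forall>s\<in>S. s \<le> u) \<in> {a. isotopy_invariant H (level K V a)}"
    if "S \<subseteq> {a. isotopy_invariant H (level K V a)} \<and> S \<noteq> {} \<and> (\<exists>u. \<forall>s\<in>S. s \<le> u)" for S
    using isotopy_invariant_levels_closed that by blast
qed

end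

lemma chartD:
  assumes "openin X W" and "homeomorphic_maps (subtopology X W) (top_of_set V) \<psi> \<psi>'"
  shows chart_subset: "W \<subseteq> topspace X"
    and chart_left_inverse: "\<And>y. y \<in> W \<Longrightarrow> \<psi>' (\<psi> y) = y"
    and chart_right_inverse: "\<And>q. q \<in> V \<Longrightarrow> \<psi> (\<psi>' q) = q"
    and chart_image: "\<psi> ` W \<subseteq> V"
    and chart_inverse_image: "\<psi>' ` V \<subseteq> W"
    and chart_continuous: "continuous_map (subtopology X W) (top_of_set V) \<psi>"
    and chart_inverse_continuous: "continuous_map (top_of_set V) X \<psi>'"
proof -
  show W: "W \<subseteq> topspace X"
    using assms(1) openin_subset by blast
  then have tW: "topspace (subtopology X W) = W"
    by auto
  have c: "continuous_map (subtopology X W) (top_of_set V) \<psi>"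
    and c': "continuous_map (top_of_set V) (subtopology X W) \<psi>'"
    using assms(2) unfolding homeomorphic_maps_def by auto
  show "\<And>y. y \<in> W \<Longrightarrow> \<psi>' (\<psi> y) = y" "\<And>q. q \<in> V \<Longrightarrow> \<psi> (\<psi>' q) = q"
    using assms(2) tW unfolding homeomorphic_maps_def by auto
  show "\<psi> ` W \<subseteq> V"
    using continuous_map_image_subset_topspace[OF c] tW by simp
  show "\<psi>' ` V \<subseteq> W"
    using continuous_map_image_subset_topspace[OF c'] tW by simp
  show "continuous_map (subtopology X W) (top_of_set V) \<psi>"
    by (rule c)
  show "continuous_map (top_of_set V) X \<psi>'"
    using c' continuous_map_in_subtopology by blast
qed

lemma chart_restrict:
  assumes W: "openin X W" and hm: "homeomorphic_maps (subtopology X W) (top_of_set V) \<psi> \<psi>'"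
    and V': "openin (top_of_set V) V'"
  shows "openin X {y \<in> W. \<psi> y \<in> V'}"
    and "homeomorphic_maps (subtopology X {y \<in> W. \<psi> y \<in> V'}) (top_of_set V') \<psi> \<psi>'"
proof -
  have tW: "topspace (subtopology X W) = W"
    using chart_subset[OF W hm] by auto
  have "openin (subtopology X W) {y \<in> topspace (subtopology X W). \<psi> y \<in> V'}"
    using openin_continuous_map_preimage[OF chart_continuous[OF W hm] V'] .
  then have "openin (subtopology X W) {y \<in> W. \<psi> y \<in> V'}"
    unfolding tW .
  then show "openin X {y \<in> W. \<psi> y \<in> V'}"
    using W openin_trans_full by blast
  have V'V: "V' \<subseteq> V"
    using openin_subset[OF V'] by simp
  have "\<psi> ` (topspace (subtopology X W) \<inter> {y \<in> W. \<psi> y \<in> V'}) = topspace (top_of_set V) \<inter> V'"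
  proof
    show "\<psi> ` (topspace (subtopology X W) \<inter> {y \<in> W. \<psi> y \<in> V'}) \<subseteq> topspace (top_of_set V) \<inter> V'"
      using V'V by auto
    show "topspace (top_of_set V) \<inter> V' \<subseteq> \<psi> ` (topspace (subtopology X W) \<inter> {y \<in> W. \<psi> y \<in> V'})"
    proof
      fix q
      assume "q \<in> topspace (top_of_set V) \<inter> V'"
      then have q: "q \<in> V" "q \<in> V'" "\<psi> (\<psi>' q) = q" "\<psi>' q \<in> W"
        using chart_right_inverse[OF W hm] chart_inverse_image[OF W hm] by auto
      then show "q \<in> \<psi> ` (topspace (subtopology X W) \<inter> {y \<in> W. \<psi> y \<in> V'})"
        by (intro rev_image_eqI[where x = "\<psi>' q"]) (use tW in auto)
    qed
  qed
  moreover have "subtopology (subtopology X W) {y \<in> W. \<psi> y \<in> V'} = subtopology X {y \<in> W. \<psi> y \<in> V'}"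
    by (simp add: subtopology_subtopology Int_absorb1)
  moreover have "subtopology (top_of_set V) V' = top_of_set V'"
    by (simp add: subtopology_subtopology Int_absorb1[OF V'V])
  ultimately show "homeomorphic_maps (subtopology X {y \<in> W. \<psi> y \<in> V'}) (top_of_set V') \<psi> \<psi>'"
    using homeomorphic_maps_subtopologies[OF hm] by metis
qed

lemma chart_preimage_image:
  assumes W: "openin X W" and hm: "homeomorphic_maps (subtopology X W) (top_of_set V) \<psi> \<psi>'"
    and A: "A \<subseteq> W"
  shows "{y \<in> W. \<psi> y \<in> \<psi> ` A} = A"
proof (intro subset_antisym subsetI)
  fix y
  assume "y \<in> {y \<in> W. \<psi> y \<in> \<psi> ` A}"
  then obtain a where a: "a \<in> A" "\<psi> y = \<psi> a" "y \<in> W"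
    by auto
  then have "\<psi>' (\<psi> y) = \<psi>' (\<psi> a)"
    by simp
  then have "y = a"
    using chart_left_inverse[OF W hm] a(3) A a(1) by (metis subsetD)
  with a(1) show "y \<in> A"
    by simp
next
  fix y
  assume "y \<in> A"
  with A show "y \<in> {y \<in> W. \<psi> y \<in> \<psi> ` A}"
    by blast
qed

lemma surface_open_image:
  fixes F :: "'a topology" and f :: "real \<times> real \<Rightarrow> 'a"
  assumes surf: "surface F" and V: "open V" and f: "continuous_map (top_of_set V) F f"
    and inj: "inj_on f V"
  shows "openin F (f ` V)"
proof (subst openin_subopen, intro ballI)
  fix x
  assume "x \<in> f ` V"
  then obtain p where p: "p \<in> V" "x = f p"
    by blast
  have "x \<in> topspace F"
    using f p continuous_map_image_subset_topspace by fastforce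
  then obtain W \<Omega> where W: "openin F W" "x \<in> W" "open (\<Omega>::(real \<times> real) set)"
      "subtopology F W homeomorphic_space top_of_set \<Omega>"
    using surf unfolding surface_def by blast
  then obtain \<phi> \<phi>' where hm: "homeomorphic_maps (subtopology F W) (top_of_set \<Omega>) \<phi> \<phi>'"
    unfolding homeomorphic_space_def by blast
  have tW: "topspace (subtopology F W) = W"
    using chart_subset[OF W(1) hm] by auto
  define V' where "V' = {q \<in> V. f q \<in> W}"
  have "openin (top_of_set V) V'"
    using openin_continuous_map_preimage[OF f W(1)] unfolding V'_def by simp
  then have oV': "open V'"
    using V openin_open_trans by blast
  have fW: "continuous_map (top_of_set V') (subtopology F W) f"
    by (rule continuous_map_into_subtopology)
       (auto simp: V'_def intro: continuous_map_from_subtopology_mono[OF f])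
  have "continuous_map (top_of_set V') (top_of_set \<Omega>) (\<phi> \<circ> f)"
    using continuous_map_compose[OF fW chart_continuous[OF W(1) hm]] .
  then have g: "continuous_on V' (\<phi> \<circ> f)" "(\<phi> \<circ> f) ` V' \<subseteq> \<Omega>"
    by (auto simp: continuous_map_subtopology_eu)
  define A where "A = f ` V'"
  have AW: "A \<subseteq> W"
    unfolding A_def V'_def by auto
  have "inj_on f V'"
    using inj_on_subset[OF inj, of V'] unfolding V'_def by blast
  moreover have "inj_on \<phi> A"
    by (rule inj_on_inverseI[where g = \<phi>']) (use chart_left_inverse[OF W(1) hm] AW in blast)
  ultimately have "inj_on (\<phi> \<circ> f) V'"
    unfolding A_def by (rule comp_inj_on)
  then have "open ((\<phi> \<circ> f) ` V')"
    by (rule invariance_of_domain[OF g(1) oV'])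
  then have "openin (top_of_set \<Omega>) (\<phi> ` A)"
    using g(2) unfolding A_def image_comp by (rule open_subset[rotated])
  from openin_continuous_map_preimage[OF chart_continuous[OF W(1) hm] this]
  have "openin (subtopology F W) A"
    unfolding tW chart_preimage_image[OF W(1) hm AW] .
  then have "openin F A"
    using W(1) openin_trans_full by blast
  moreover have "x \<in> A" "A \<subseteq> f ` V"
    using p W(2) unfolding A_def V'_def by auto
  ultimately show "\<exists>T. openin F T \<and> x \<in> T \<and> T \<subseteq> f ` V"
    by blast
qed

lemma surface_chart_open:
  assumes surf: "surface F" and WF: "W \<subseteq> topspace F" and V: "open (V::(real \<times> real) set)"
    and hs: "subtopology F W homeomorphic_space top_of_set V"
  shows "openin F W"
proof -
  obtain \<phi> \<phi>' where hm: "homeomorphic_maps (subtopology F W) (top_of_set V) \<phi> \<phi>'"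
    using hs unfolding homeomorphic_space_def by blast
  have tW: "topspace (subtopology F W) = W"
    using WF by auto
  have c: "continuous_map (top_of_set V) (subtopology F W) \<phi>'"
    using hm unfolding homeomorphic_maps_def by auto
  have inv: "\<And>w. w \<in> W \<Longrightarrow> \<phi> w \<in> V \<and> \<phi>' (\<phi> w) = w" "\<And>q. q \<in> V \<Longrightarrow> \<phi> (\<phi>' q) = q"
    using hm tW continuous_map_image_subset_topspace unfolding homeomorphic_maps_def by fastforce+
  have "\<phi>' ` V = W"
  proof
    show "\<phi>' ` V \<subseteq> W"
      using continuous_map_image_subset_topspace[OF c] tW by simp
    show "W \<subseteq> \<phi>' ` V"
    proof
      fix w
      assume "w \<in> W"
      then show "w \<in> \<phi>' ` V"
        using inv(1)[of w] by (metis image_eqI)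
    qed
  qed
  moreover have "inj_on \<phi>' V"
    using inv(2) by (rule inj_on_inverseI)
  moreover have "continuous_map (top_of_set V) F \<phi>'"
    using c continuous_map_in_subtopology by blast
  ultimately show ?thesis
    using surface_open_image[OF surf V] by metis
qed

lemma subsurface_interior_open:
  assumes surf: "surface F" and S: "S \<subseteq> topspace F"
    and x: "x \<in> S" "x \<notin> mbdry (subtopology F S)"
  shows "\<exists>W. openin F W \<and> x \<in> W \<and> W \<subseteq> S"
proof -
  obtain W V where W: "openin (subtopology F S) W" "x \<in> W" "open (V::(real \<times> real) set)"
      "subtopology (subtopology F S) W homeomorphic_space top_of_set V"
    using x S unfolding mbdry_def by auto
  have WS: "W \<subseteq> S"
    using openin_subset[OF W(1)] S by auto
  have "subtopology (subtopology F S) W = subtopology F W"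
    by (simp add: subtopology_subtopology Int_absorb1[OF WS])
  then have "openin F W"
    using surface_chart_open[OF surf _ W(3)] W(4) WS S by auto
  with W(2) WS show ?thesis
    by blast
qed

lemma surface_wb_chart:
  assumes "surface_wb X" and "x \<in> topspace X"
  obtains W V \<psi> \<psi>' where "openin X W" "x \<in> W" "openin (top_of_set halfplane) V"
    "homeomorphic_maps (subtopology X W) (top_of_set V) \<psi> \<psi>'"
  using assms unfolding surface_wb_def homeomorphic_space_def by metis

lemma openin_halfplane_ball:
  assumes "openin (top_of_set halfplane) A" and "p \<in> A"
  shows "\<exists>e>0. \<forall>q\<in>halfplane. dist p q < e \<longrightarrow> q \<in> A"
proof -
  obtain B where B: "open B" "A = halfplane \<inter> B"
    using assms(1) by (auto simp: openin_open)
  then obtain e where "e > 0" "ball p e \<subseteq> B"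
    using assms(2) open_contains_ball by blast
  with B(2) show ?thesis
    by (auto simp: subset_iff)
qed

lemma open_upper_halfplane: "open {p::real \<times> real. 0 < snd p}"
  using open_Collect_less[of "\<lambda>_. 0::real" snd] by (simp add: continuous_on_snd)

lemma open_subset_halfplane_off_line:
  assumes "open S" and "S \<subseteq> halfplane" and "p \<in> S"
  shows "snd p \<noteq> 0"
proof
  assume p: "snd p = 0"
  obtain e where e: "e > 0" "ball p e \<subseteq> S"
    using assms(1,3) open_contains_ball by blast
  have "dist p (fst p, - e / 2) = e / 2"
    using p e(1) by (cases p) (simp add: dist_Pair_Pair dist_real_def)
  then have "(fst p, - e / 2) \<in> ball p e"
    using e(1) by simp
  then have "(fst p, - e / 2) \<in> halfplane"
    using e(2) assms(2) by blast
  then show False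
    using e(1) unfolding halfplane_def by simp
qed

lemma halfplane_chart_boundary:
  assumes W: "openin X W" and hm: "homeomorphic_maps (subtopology X W) (top_of_set V) \<psi> \<psi>'"
    and V: "openin (top_of_set halfplane) V" and y: "y \<in> W" "y \<in> mbdry X"
  shows "snd (\<psi> y) = 0"
proof (rule ccontr)
  assume "snd (\<psi> y) \<noteq> 0"
  moreover have "\<psi> y \<in> halfplane"
    using chart_image[OF W hm] y(1) openin_imp_subset[OF V] by auto
  ultimately have pos: "0 < snd (\<psi> y)"
    unfolding halfplane_def by simp
  define V' where "V' = V \<inter> {p. 0 < snd p}"
  obtain B where B: "open B" "V = halfplane \<inter> B"
    using V by (auto simp: openin_open)
  have "V' = B \<inter> {p. 0 < snd p}"
    unfolding V'_def B(2) halfplane_def by auto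
  then have oV': "open V'"
    using B(1) open_upper_halfplane by auto
  have "openin (top_of_set V) V'"
    unfolding V'_def by (rule openin_subtopology_Int2) (simp add: open_upper_halfplane)
  from chart_restrict[OF W hm this]
  have "openin X {z \<in> W. \<psi> z \<in> V'}"
    and "subtopology X {z \<in> W. \<psi> z \<in> V'} homeomorphic_space top_of_set V'"
    using homeomorphic_maps_imp_homeomorphic_space by blast+
  moreover have "y \<in> {z \<in> W. \<psi> z \<in> V'}"
    using y(1) pos chart_image[OF W hm] unfolding V'_def by auto
  ultimately have "y \<notin> mbdry X"
    using oV' unfolding mbdry_def by blast
  then show False
    using y(2) by contradiction
qed

lemma halfplane_chart_interior:
  assumes W: "openin X W" and hm: "homeomorphic_maps (subtopology X W) (top_of_set V) \<psi> \<psi>'"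
    and V: "openin (top_of_set halfplane) V" and q: "q \<in> V" "snd q \<noteq> 0"
  shows "\<psi>' q \<notin> mbdry X"
proof
  assume bdry: "\<psi>' q \<in> mbdry X"
  have "\<psi>' q \<in> W"
    using chart_inverse_image[OF W hm] q(1) by blast
  then have "snd (\<psi> (\<psi>' q)) = 0"
    using bdry by (rule halfplane_chart_boundary[OF W hm V])
  then show False
    using chart_right_inverse[OF W hm q(1)] q(2) by simp
qed

text \<open>Conversely, points of the boundary line are boundary points: otherwise a planar chart
  composed with the half-plane chart would map an open planar set injectively onto a set
  meeting the line, contradicting invariance of domain.\<close>
lemma halfplane_chart_line:
  assumes W: "openin X W" and hm: "homeomorphic_maps (subtopology X W) (top_of_set V) \<psi> \<psi>'"
    and V: "openin (top_of_set halfplane) V" and p: "p \<in> V" "snd p = 0"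
  shows "\<psi>' p \<in> mbdry X"
proof (rule ccontr)
  define y where "y = \<psi>' p"
  have y: "y \<in> W" "\<psi> y = p"
    using chart_inverse_image[OF W hm] chart_right_inverse[OF W hm] p(1) unfolding y_def by auto
  assume "\<psi>' p \<notin> mbdry X"
  then obtain W2 V2 where W2: "openin X W2" "y \<in> W2" "open (V2::(real \<times> real) set)"
      "subtopology X W2 homeomorphic_space top_of_set V2"
    using y(1) chart_subset[OF W hm] unfolding mbdry_def y_def by auto
  then obtain \<theta> \<theta>' where hm2: "homeomorphic_maps (subtopology X W2) (top_of_set V2) \<theta> \<theta>'"
    unfolding homeomorphic_space_def by blast
  define T where "T = {q \<in> V2. \<theta>' q \<in> W}"
  have "openin (top_of_set V2) T"
    using openin_continuous_map_preimage[OF chart_inverse_continuous[OF W2(1) hm2] W]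
    unfolding T_def by simp
  then have oT: "open T"
    using W2(3) openin_open_trans by blast
  have "continuous_map (top_of_set T) (subtopology X W) \<theta>'"
    by (rule continuous_map_into_subtopology)
       (auto simp: T_def intro: continuous_map_from_subtopology_mono[OF chart_inverse_continuous[OF W2(1) hm2]])
  then have "continuous_map (top_of_set T) (top_of_set V) (\<psi> \<circ> \<theta>')"
    using continuous_map_compose chart_continuous[OF W hm] by blast
  then have g: "continuous_on T (\<psi> \<circ> \<theta>')" "(\<psi> \<circ> \<theta>') ` T \<subseteq> V"
    by (auto simp: continuous_map_subtopology_eu)
  have "inj_on \<theta>' T"
    by (rule inj_on_inverseI[where g = \<theta>]) (use chart_right_inverse[OF W2(1) hm2] in \<open>auto simp: T_def\<close>)
  moreover have "inj_on \<psi> (\<theta>' ` T)"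
    by (rule inj_on_inverseI[where g = \<psi>']) (use chart_left_inverse[OF W hm] in \<open>auto simp: T_def\<close>)
  ultimately have "inj_on (\<psi> \<circ> \<theta>') T"
    by (rule comp_inj_on)
  then have "open ((\<psi> \<circ> \<theta>') ` T)"
    by (rule invariance_of_domain[OF g(1) oT])
  moreover have "\<theta> y \<in> T" "\<theta>' (\<theta> y) = y"
    using chart_image[OF W2(1) hm2] chart_left_inverse[OF W2(1) hm2] W2(2) y(1)
    unfolding T_def by auto
  then have "p \<in> (\<psi> \<circ> \<theta>') ` T"
    using y(2) by (intro rev_image_eqI[where x = "\<theta> y"]) auto
  moreover have "(\<psi> \<circ> \<theta>') ` T \<subseteq> halfplane"
    using g(2) openin_imp_subset[OF V] by auto
  ultimately show False
    using open_subset_halfplane_off_line p(2) by blast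
qed

lemma glued_chart_open:
  fixes f g :: "real \<times> real \<Rightarrow> 'a"
  assumes surf: "surface F" and D: "open D"
    and f: "continuous_map (top_of_set {q \<in> D. 0 \<le> snd q}) F f"
    and g: "continuous_map (top_of_set {q \<in> D. snd q \<le> 0}) F g"
    and seam: "\<And>q. q \<in> D \<Longrightarrow> snd q = 0 \<Longrightarrow> f q = g q"
    and inj_f: "inj_on f {q \<in> D. 0 \<le> snd q}" and inj_g: "inj_on g {q \<in> D. snd q < 0}"
    and f_in: "f ` {q \<in> D. 0 \<le> snd q} \<subseteq> P" and g_out: "g ` {q \<in> D. snd q < 0} \<inter> P = {}"
  shows "openin F ((\<lambda>q. if 0 \<le> snd q then f q else g q) ` D)"
proof (rule surface_open_image[OF surf D])
  have upper: "subtopology (top_of_set D) {q \<in> D. 0 \<le> snd q} = top_of_set {q \<in> D. 0 \<le> snd q}"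
    and lower: "subtopology (top_of_set D) {q \<in> D. snd q \<le> 0} = top_of_set {q \<in> D. snd q \<le> 0}"
    by (simp_all add: subtopology_subtopology Int_def)
  show "continuous_map (top_of_set D) F (\<lambda>q. if 0 \<le> snd q then f q else g q)"
  proof (rule continuous_map_cases_le)
    show "continuous_map (top_of_set D) euclideanreal snd"
      using continuous_on_snd[OF continuous_on_id, of D] by simp
  qed (use f g seam in \<open>simp_all add: upper lower\<close>)
  show "inj_on (\<lambda>q. if 0 \<le> snd q then f q else g q) D"
  proof (rule inj_onI)
    fix p q
    assume p: "p \<in> D" and q: "q \<in> D"
      and eq: "(if 0 \<le> snd p then f p else g p) = (if 0 \<le> snd q then f q else g q)"
    consider "0 \<le> snd p" "0 \<le> snd q" | "snd p < 0" "snd q < 0"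
      | "0 \<le> snd p" "snd q < 0" | "snd p < 0" "0 \<le> snd q"
      by linarith
    then show "p = q"
    proof cases
      case 1
      then show ?thesis
        using eq p q inj_onD[OF inj_f] by auto
    next
      case 2
      then show ?thesis
        using eq p q inj_onD[OF inj_g] by auto
    next
      case 3
      then show ?thesis
        using eq p q f_in g_out by auto
    next
      case 4
      then show ?thesis
        using eq p q f_in g_out by auto
    qed
  qed
qed

definition half_disc :: "real \<Rightarrow> real \<Rightarrow> (real \<times> real) set" where
  "half_disc s R = {q \<in> halfplane. dist (s, 0) q < R}"

lemma diameter_in_half_disc: "s \<in> {s0 - R<..<s0 + R} \<Longrightarrow> (s, 0) \<in> half_disc s0 R"
  unfolding half_disc_def halfplane_def
  by (simp add: dist_Pair_Pair dist_real_def abs_minus_commute abs_less_iff)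

lemma boundary_half_disc:
  fixes F :: "'a topology"
  assumes wb: "surface_wb (subtopology F P)" and PF: "P \<subseteq> topspace F"
    and z: "z \<in> mbdry (subtopology F P)" and N: "openin F N" "z \<in> N"
  obtains f s0 R where "0 < R" "continuous_map (top_of_set (half_disc s0 R)) F f"
    "inj_on f (half_disc s0 R)" "f ` half_disc s0 R \<subseteq> P \<inter> N" "f (s0, 0) = z"
    "\<And>s. s \<in> {s0 - R<..<s0 + R} \<Longrightarrow> f (s, 0) \<in> mbdry (subtopology F P)"
proof -
  let ?X = "subtopology F P"
  have zP: "z \<in> topspace ?X"
    using z unfolding mbdry_def by blast
  obtain W V \<psi> \<psi>' where W: "openin ?X W" "z \<in> W" and V: "openin (top_of_set halfplane) V"
    and hm: "homeomorphic_maps (subtopology ?X W) (top_of_set V) \<psi> \<psi>'"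
    by (rule surface_wb_chart[OF wb zP])
  note chart = chartD[OF W(1) hm]
  define s0 where "s0 = fst (\<psi> z)"
  have \<psi>z: "\<psi> z = (s0, 0)"
    using halfplane_chart_boundary[OF W(1) hm V W(2) z] unfolding s0_def by (metis prod.collapse)
  have zPN: "z \<in> P \<inter> N"
    using zP N(2) by simp
  have "openin ?X (P \<inter> N)"
    using N(1) by (simp add: openin_subtopology_Int2)
  then have "openin (top_of_set V) {p \<in> V. \<psi>' p \<in> P \<inter> N}"
    using openin_continuous_map_preimage[OF chart(7)] by (metis topspace_euclidean_subtopology)
  then have "openin (top_of_set halfplane) {p \<in> V. \<psi>' p \<in> P \<inter> N}"
    using V openin_trans by blast
  moreover have "(s0, 0) \<in> {p \<in> V. \<psi>' p \<in> P \<inter> N}"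
    using \<psi>z chart(2)[OF W(2)] chart(4) W(2) zPN by auto
  ultimately have "\<exists>e>0. \<forall>q\<in>halfplane. dist (s0, 0) q < e \<longrightarrow> q \<in> {p \<in> V. \<psi>' p \<in> P \<inter> N}"
    by (rule openin_halfplane_ball)
  then obtain R where R: "0 < R" "\<forall>q\<in>halfplane. dist (s0, 0) q < R \<longrightarrow> q \<in> V \<and> \<psi>' q \<in> P \<inter> N"
    by blast
  then have HV: "half_disc s0 R \<subseteq> V" and HPN: "\<psi>' ` half_disc s0 R \<subseteq> P \<inter> N"
    unfolding half_disc_def by auto
  show thesis
  proof (rule that[OF R(1)])
    have "continuous_map (top_of_set V) F \<psi>'"
      using chart(7) continuous_map_in_subtopology by blast
    then have "continuous_map (subtopology (top_of_set V) (half_disc s0 R)) F \<psi>'"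
      by (rule continuous_map_from_subtopology)
    then show "continuous_map (top_of_set (half_disc s0 R)) F \<psi>'"
      by (simp add: subtopology_subtopology Int_absorb1[OF HV])
    show "inj_on \<psi>' (half_disc s0 R)"
      by (rule inj_on_inverseI[where g = \<psi>]) (use chart(3) HV in blast)
    show "\<psi>' ` half_disc s0 R \<subseteq> P \<inter> N"
      by (rule HPN)
    show "\<psi>' (s0, 0) = z"
      using chart(2)[OF W(2)] \<psi>z by simp
    show "\<psi>' (s, 0) \<in> mbdry ?X" if "s \<in> {s0 - R<..<s0 + R}" for s
    proof (rule halfplane_chart_line[OF W(1) hm V])
      show "(s, 0) \<in> V"
        using diameter_in_half_disc[OF that] HV by blast
    qed simp
  qed
qed

lemma boundary_seam_coordinate:
  assumes W: "openin X W" and hm: "homeomorphic_maps (subtopology X W) (top_of_set V) \<kappa> \<kappa>'"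
    and V: "openin (top_of_set halfplane) V"
    and \<gamma>: "continuous_map (top_of_set I) X \<gamma>" and \<gamma>I: "\<And>s. s \<in> I \<Longrightarrow> \<gamma> s \<in> W \<inter> mbdry X"
  shows "continuous_on I (\<lambda>s. fst (\<kappa> (\<gamma> s)))"
    and "\<And>s. s \<in> I \<Longrightarrow> (fst (\<kappa> (\<gamma> s)), 0) \<in> V \<and> \<kappa>' (fst (\<kappa> (\<gamma> s)), 0) = \<gamma> s"
proof -
  have "continuous_map (top_of_set I) (subtopology X W) \<gamma>"
    using \<gamma> \<gamma>I by (auto intro: continuous_map_into_subtopology)
  then have "continuous_map (top_of_set I) (top_of_set V) (\<kappa> \<circ> \<gamma>)"
    using continuous_map_compose chart_continuous[OF W hm] by blast
  then have "continuous_on I (\<kappa> \<circ> \<gamma>)"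
    by (simp add: continuous_map_subtopology_eu)
  then show "continuous_on I (\<lambda>s. fst (\<kappa> (\<gamma> s)))"
    unfolding o_def by (intro continuous_intros)
  show "(fst (\<kappa> (\<gamma> s)), 0) \<in> V \<and> \<kappa>' (fst (\<kappa> (\<gamma> s)), 0) = \<gamma> s" if s: "s \<in> I" for s
  proof -
    have "snd (\<kappa> (\<gamma> s)) = 0"
      using halfplane_chart_boundary[OF W hm V] \<gamma>I[OF s] by blast
    then have "(fst (\<kappa> (\<gamma> s)), 0) = \<kappa> (\<gamma> s)"
      by (metis prod.collapse)
    then show ?thesis
      using \<gamma>I[OF s] chart_image[OF W hm] chart_left_inverse[OF W hm] by auto
  qed
qed

lemma square_in_half_disc:
  assumes "r \<le> R / 2" and "q \<in> {s0 - r<..<s0 + r} \<times> {- r<..<r}" and "0 \<le> snd q"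
  shows "q \<in> half_disc s0 R"
proof -
  have "dist (s0, 0) q \<le> \<bar>s0 - fst q\<bar> + \<bar>0 - snd q\<bar>"
    using sqrt_sum_squares_le_sum_abs[of "s0 - fst q" "0 - snd q"]
    by (cases q) (simp add: dist_Pair_Pair dist_real_def)
  also have "\<dots> < R"
    using assms by (cases q) auto
  finally show ?thesis
    using assms(3) unfolding half_disc_def halfplane_def by simp
qed

lemma collar_above_seam:
  fixes \<beta> :: "real \<Rightarrow> real"
  assumes V: "openin (top_of_set halfplane) V" and \<beta>: "continuous_on I \<beta>"
    and s0: "s0 \<in> I" "(\<beta> s0, 0) \<in> V"
  shows "\<exists>r>0. \<forall>s y. s \<in> I \<and> \<bar>s - s0\<bar> < r \<and> 0 \<le> y \<and> y < r \<longrightarrow> (\<beta> s, y) \<in> V"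
proof -
  obtain \<epsilon> where \<epsilon>: "0 < \<epsilon>" "\<forall>q\<in>halfplane. dist (\<beta> s0, 0) q < \<epsilon> \<longrightarrow> q \<in> V"
    using openin_halfplane_ball[OF V s0(2)] by blast
  have "\<exists>d>0. \<forall>s\<in>I. dist s s0 < d \<longrightarrow> dist (\<beta> s) (\<beta> s0) < \<epsilon> / 2"
    using \<beta> half_gt_zero[OF \<epsilon>(1)] s0(1) unfolding continuous_on_iff by blast
  then obtain d where d: "0 < d" "\<forall>s\<in>I. dist s s0 < d \<longrightarrow> dist (\<beta> s) (\<beta> s0) < \<epsilon> / 2"
    by blast
  have "(\<beta> s, y) \<in> V" if "s \<in> I" "\<bar>s - s0\<bar> < min d (\<epsilon> / 2)" "0 \<le> y" "y < min d (\<epsilon> / 2)" for s y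
  proof -
    have "\<bar>\<beta> s - \<beta> s0\<bar> < \<epsilon> / 2"
      using d(2) that(1,2) by (simp add: dist_real_def)
    then have "dist (\<beta> s0, 0) (\<beta> s, y) < \<epsilon>"
      using sqrt_sum_squares_le_sum_abs[of "\<beta> s0 - \<beta> s" y] that(3,4)
      by (simp add: dist_Pair_Pair dist_real_def abs_minus_commute)
    moreover have "(\<beta> s, y) \<in> halfplane"
      using that(3) unfolding halfplane_def by simp
    ultimately show ?thesis
      using \<epsilon>(2) by blast
  qed
  moreover have "0 < min d (\<epsilon> / 2)"
    using d(1) \<epsilon>(1) by simp
  ultimately show ?thesis
    by blast
qed

lemma reflected_core_chart:
  fixes g :: "real \<times> real \<Rightarrow> 'a" and \<beta> :: "real \<Rightarrow> real"
  assumes g: "continuous_map (top_of_set V) F g" "inj_on g V" "\<And>q. q \<in> V \<Longrightarrow> 0 < snd q \<Longrightarrow> g q \<notin> P"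
    and \<beta>: "continuous_on I \<beta>" "inj_on \<beta> I"
    and E: "\<And>q. q \<in> E \<Longrightarrow> fst q \<in> I \<and> (\<beta> (fst q), - snd q) \<in> V"
  shows "continuous_map (top_of_set E) F (\<lambda>q. g (\<beta> (fst q), - snd q))"
    and "inj_on (\<lambda>q. g (\<beta> (fst q), - snd q)) E"
    and "\<And>q. q \<in> E \<Longrightarrow> snd q < 0 \<Longrightarrow> g (\<beta> (fst q), - snd q) \<notin> P"
proof -
  define L where "L q = (\<beta> (fst q), - snd q)" for q :: "real \<times> real"
  have "continuous_on E (\<lambda>q. \<beta> (fst q))"
    by (rule continuous_on_compose2[OF \<beta>(1) continuous_on_fst[OF continuous_on_id]]) (use E in auto)
  then have "continuous_on E L"
    unfolding L_def by (intro continuous_on_Pair continuous_on_minus continuous_on_snd continuous_on_id)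
  moreover have LV: "L ` E \<subseteq> V"
    using E unfolding L_def by blast
  ultimately have "continuous_map (top_of_set E) (top_of_set V) L"
    by (simp add: continuous_map_subtopology_eu image_subset_iff_funcset)
  from continuous_map_compose[OF this g(1)]
  show "continuous_map (top_of_set E) F (\<lambda>q. g (\<beta> (fst q), - snd q))"
    by (simp add: L_def o_def)
  have "inj_on L E"
  proof (rule inj_onI)
    fix p q
    assume "p \<in> E" "q \<in> E" "L p = L q"
    then have "fst p = fst q" "snd p = snd q"
      using inj_onD[OF \<beta>(2)] E unfolding L_def by auto
    then show "p = q"
      by (simp add: prod_eq_iff)
  qed
  then have "inj_on (g \<circ> L) E"
    using comp_inj_on inj_on_subset[OF g(2) LV] by blast
  then show "inj_on (\<lambda>q. g (\<beta> (fst q), - snd q)) E"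
    by (simp add: L_def o_def)
  show "g (\<beta> (fst q), - snd q) \<notin> P" if "q \<in> E" "snd q < 0" for q
    using g(3) E[OF that(1)] that(2) by simp
qed

lemma collar_glue:
  fixes f g :: "real \<times> real \<Rightarrow> 'a"
  assumes surf: "surface F" and R: "0 < R"
    and f: "continuous_map (top_of_set (half_disc s0 R)) F f" "inj_on f (half_disc s0 R)"
      "f ` half_disc s0 R \<subseteq> P"
    and V: "openin (top_of_set halfplane) V"
    and g: "continuous_map (top_of_set V) F g" "inj_on g V" "\<And>q. q \<in> V \<Longrightarrow> 0 < snd q \<Longrightarrow> g q \<notin> P"
    and \<beta>: "continuous_on {s0 - R<..<s0 + R} \<beta>"
      "\<And>s. s \<in> {s0 - R<..<s0 + R} \<Longrightarrow> (\<beta> s, 0) \<in> V \<and> g (\<beta> s, 0) = f (s, 0)"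
  shows "\<exists>Ob. openin F Ob \<and> f (s0, 0) \<in> Ob \<and> Ob \<subseteq> f ` half_disc s0 R \<union> g ` V"
proof -
  define I where "I = {s0 - R<..<s0 + R}"
  have s0I: "s0 \<in> I"
    using R unfolding I_def by simp
  have on_line: "(s, 0) \<in> half_disc s0 R" if "s \<in> I" for s
    using that unfolding I_def by (rule diameter_in_half_disc)
  have "inj_on \<beta> I"
  proof (rule inj_onI)
    fix s s'
    assume "s \<in> I" "s' \<in> I" "\<beta> s = \<beta> s'"
    then have "f (s, 0) = f (s', 0)"
      using \<beta>(2) unfolding I_def by metis
    then show "s = s'"
      using inj_onD[OF f(2) _ on_line on_line] \<open>s \<in> I\<close> \<open>s' \<in> I\<close> by simp
  qed
  have "(\<beta> s0, 0) \<in> V" "continuous_on I \<beta>"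
    using \<beta> s0I unfolding I_def by auto
  then obtain r0 where r0: "0 < r0"
    "\<And>s y. s \<in> I \<Longrightarrow> \<bar>s - s0\<bar> < r0 \<Longrightarrow> 0 \<le> y \<Longrightarrow> y < r0 \<Longrightarrow> (\<beta> s, y) \<in> V"
    using collar_above_seam[OF V _ s0I] by blast
  define r where "r = min (R / 2) r0"
  have r: "0 < r" "r \<le> R / 2" "r \<le> r0"
    using R r0(1) unfolding r_def by auto
  define D where "D = {s0 - r<..<s0 + r} \<times> {- r<..<r}"
  have D: "fst q \<in> I" "\<bar>fst q - s0\<bar> < r" "\<bar>snd q\<bar> < r" if "q \<in> D" for q
    using that r unfolding D_def I_def by (auto simp: abs_less_iff)
  have upper: "{q \<in> D. 0 \<le> snd q} \<subseteq> half_disc s0 R"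
    using square_in_half_disc[OF r(2)] unfolding D_def by blast
  have lower: "fst q \<in> I \<and> (\<beta> (fst q), - snd q) \<in> V" if "q \<in> {q \<in> D. snd q \<le> 0}" for q
  proof -
    have "fst q \<in> I" "\<bar>fst q - s0\<bar> < r0" "0 \<le> - snd q" "- snd q < r0"
      using D[of q] that r(3) by auto
    then show ?thesis
      using r0(2) by blast
  qed
  note core = reflected_core_chart[where E = "{q \<in> D. snd q \<le> 0}", OF g \<open>continuous_on I \<beta>\<close> \<open>inj_on \<beta> I\<close> lower]
  let ?\<Gamma> = "\<lambda>q. if 0 \<le> snd q then f q else g (\<beta> (fst q), - snd q)"
  have "openin F (?\<Gamma> ` D)"
  proof (rule glued_chart_open[OF surf _ _ core(1), where P = P])
    show "open D"
      unfolding D_def by (simp add: open_Times)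
    show "continuous_map (top_of_set {q \<in> D. 0 \<le> snd q}) F f"
      using continuous_map_from_subtopology[OF f(1), of "{q \<in> D. 0 \<le> snd q}"] upper
      by (simp add: subtopology_subtopology Int_absorb1)
    show "f q = g (\<beta> (fst q), - snd q)" if "q \<in> D" "snd q = 0" for q
    proof -
      have "f q = f (fst q, 0)"
        using that(2) by (metis prod.collapse)
      also have "\<dots> = g (\<beta> (fst q), 0)"
        using \<beta>(2) D(1)[OF that(1)] unfolding I_def by simp
      finally show ?thesis
        using that(2) by simp
    qed
    show "inj_on f {q \<in> D. 0 \<le> snd q}"
      by (rule inj_on_subset[OF f(2) upper])
    show "inj_on (\<lambda>q. g (\<beta> (fst q), - snd q)) {q \<in> D. snd q < 0}"
      using core(2) by (rule inj_on_subset) auto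
    show "f ` {q \<in> D. 0 \<le> snd q} \<subseteq> P"
      using image_mono[OF upper] f(3) by (rule order_trans)
    show "(\<lambda>q. g (\<beta> (fst q), - snd q)) ` {q \<in> D. snd q < 0} \<inter> P = {}"
      using core(3) by auto
  qed
  moreover have "f (s0, 0) \<in> ?\<Gamma> ` D"
    using r(1) unfolding D_def by (intro rev_image_eqI[where x = "(s0, 0)"]) auto
  moreover have "?\<Gamma> ` D \<subseteq> f ` half_disc s0 R \<union> g ` V"
    using upper lower by auto
  ultimately show ?thesis
    by blast
qed

lemma boundary_point_neighbourhood:
  fixes F :: "'a topology"
  assumes surf: "surface F" and KF: "K \<subseteq> topspace F" and PF: "P \<subseteq> topspace F"
    and wbK: "surface_wb (subtopology F K)" and wbP: "surface_wb (subtopology F P)"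
    and PK: "P \<inter> K = mbdry (subtopology F P)"
    and BPK: "mbdry (subtopology F P) \<subseteq> mbdry (subtopology F K)"
    and U: "openin (subtopology F P) U" and z: "z \<in> mbdry (subtopology F P)" "z \<in> U"
  shows "\<exists>Ob. openin F Ob \<and> z \<in> Ob \<and> Ob \<subseteq> K \<union> U"
proof -
  let ?XK = "subtopology F K"
  have "z \<in> topspace ?XK"
    using z(1) PK KF by auto
  then obtain WK VK \<kappa> \<kappa>' where WK: "openin ?XK WK" "z \<in> WK"
    and VK: "openin (top_of_set halfplane) VK"
    and hmK: "homeomorphic_maps (subtopology ?XK WK) (top_of_set VK) \<kappa> \<kappa>'"
    by (rule surface_wb_chart[OF wbK])
  note chartK = chartD[OF WK(1) hmK]
  obtain OK where OK: "openin F OK" "WK = OK \<inter> K"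
    using WK(1) unfolding openin_subtopology by blast
  obtain OU where OU: "openin F OU" "U = OU \<inter> P"
    using U unfolding openin_subtopology by blast
  have "openin F (OK \<inter> OU)" "z \<in> OK \<inter> OU"
    using OK OU WK(2) z(2) by auto
  then obtain f s0 R where R: "0 < R" and
    f: "continuous_map (top_of_set (half_disc s0 R)) F f" "inj_on f (half_disc s0 R)"
       "f ` half_disc s0 R \<subseteq> P \<inter> (OK \<inter> OU)" "f (s0, 0) = z"
    and f_bdry: "\<And>s. s \<in> {s0 - R<..<s0 + R} \<Longrightarrow> f (s, 0) \<in> mbdry (subtopology F P)"
    by (rule boundary_half_disc[OF wbP PF z(1)]) blast
  define I where "I = {s0 - R<..<s0 + R}"
  have on_line: "(s, 0) \<in> half_disc s0 R" if "s \<in> I" for s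
    using that unfolding I_def by (rule diameter_in_half_disc)
  have seam: "f (s, 0) \<in> WK \<inter> mbdry ?XK" if "s \<in> I" for s
  proof -
    have "f (s, 0) \<in> mbdry (subtopology F P)"
      using f_bdry that unfolding I_def .
    moreover have "f (s, 0) \<in> OK"
      using f(3) on_line[OF that] by blast
    ultimately show ?thesis
      using PK BPK OK(2) by blast
  qed
  have "continuous_map (top_of_set I) (top_of_set (half_disc s0 R)) (\<lambda>s. (s, 0))"
    using on_line by (auto simp: continuous_map_subtopology_eu intro!: continuous_intros)
  from continuous_map_compose[OF this f(1)]
  have "continuous_map (top_of_set I) F (\<lambda>s. f (s, 0))"
    by (simp add: o_def)
  then have "continuous_map (top_of_set I) ?XK (\<lambda>s. f (s, 0))"
    using seam chartK(1) by (auto simp: continuous_map_in_subtopology)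
  note \<beta> = boundary_seam_coordinate[OF WK(1) hmK VK this seam]
  have "\<exists>Ob. openin F Ob \<and> f (s0, 0) \<in> Ob \<and> Ob \<subseteq> f ` half_disc s0 R \<union> \<kappa>' ` VK"
  proof (rule collar_glue[OF surf R f(1,2) _ VK, where P = P])
    show "f ` half_disc s0 R \<subseteq> P"
      using f(3) by blast
    show "continuous_map (top_of_set VK) F \<kappa>'"
      using chartK(7) continuous_map_in_subtopology by blast
    show "inj_on \<kappa>' VK"
      using chartK(3) by (rule inj_on_inverseI)
    show "\<kappa>' q \<notin> P" if "q \<in> VK" "0 < snd q" for q
    proof
      assume "\<kappa>' q \<in> P"
      then have "\<kappa>' q \<in> mbdry ?XK"
        using chartK(5) that(1) PK BPK OK(2) by blast
      then show False
        using halfplane_chart_interior[OF WK(1) hmK VK that(1)] that(2) by simp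
    qed
  qed (use \<beta> in \<open>simp_all add: I_def\<close>)
  moreover have "f ` half_disc s0 R \<union> \<kappa>' ` VK \<subseteq> K \<union> U"
    using f(3) chartK(5) OK(2) OU(2) by blast
  ultimately show ?thesis
    using f(4) by blast
qed

lemma second_countable_euclidean:
  "second_countable (euclidean :: ('b::second_countable_topology) topology)"
proof -
  obtain \<B> :: "'b set set" where \<B>: "countable \<B>" "\<And>C. C \<in> \<B> \<Longrightarrow> open C"
      "\<And>S. open S \<Longrightarrow> \<exists>\<U>\<subseteq>\<B>. S = \<Union>\<U>"
    using univ_second_countable by blast
  show ?thesis
    unfolding second_countable_def
  proof (intro exI conjI allI impI)
    show "countable \<B>" "\<forall>V\<in>\<B>. openin euclidean V"
      using \<B>(1,2) by auto
    fix U :: "'b set" and x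
    assume "openin euclidean U \<and> x \<in> U"
    then obtain \<U> where "\<U> \<subseteq> \<B>" "U = \<Union>\<U>" "x \<in> U"
      using \<B>(3) by auto
    then show "\<exists>V\<in>\<B>. x \<in> V \<and> V \<subseteq> U"
      by blast
  qed
qed

lemma omega_bounded_separable_closure_compact:
  assumes ob: "omega_bounded F" and S: "S \<subseteq> topspace F" and sep: "separable_space (subtopology F S)"
  shows "compactin F (F closure_of S)"
proof -
  obtain C where C: "countable C" "C \<subseteq> S" "(subtopology F S) closure_of C = S"
    using sep S unfolding separable_space_def by (auto simp: Int_absorb1)
  then have "S \<subseteq> F closure_of C"
    by (metis closure_of_subtopology inf.absorb_iff2 inf_le2)
  then have "F closure_of S = F closure_of C"
    using closure_of_minimal[OF _ closedin_closure_of] closure_of_mono[OF C(2)] by blast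
  moreover have "compactin F (F closure_of C)"
    using ob C(1,2) S unfolding omega_bounded_def by blast
  ultimately show ?thesis
    by simp
qed

lemma long_pipeD:
  assumes "long_pipe X P U"
  shows long_pipe_subset: "P \<subseteq> topspace X"
    and long_pipe_surface: "surface_wb (subtopology X P)"
    and long_pipe_union: "P = (\<Union>a. U a)"
    and long_pipe_open: "openin (subtopology X P) (U a)"
    and long_pipe_boundary: "mbdry (subtopology X P) \<subseteq> U a"
    and long_pipe_collar: "subtopology X (U a) homeomorphic_space
          prod_topology (top_of_set S1) (top_of_set {0::real..})"
    and long_pipe_closure: "a < b \<Longrightarrow> (subtopology X P) closure_of (U a) \<subseteq> U b"
  using assms unfolding long_pipe_def by blast+

lemma long_pipe_mono:
  assumes "long_pipe X P U" and "a \<le> b"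
  shows "U a \<subseteq> U b"
proof (cases "a = b")
  case False
  then have "a < b"
    using assms(2) by simp
  have "U a \<subseteq> topspace (subtopology X P)"
    using long_pipe_union[OF assms(1)] long_pipe_subset[OF assms(1)] by auto
  then have "U a \<subseteq> (subtopology X P) closure_of (U a)"
    by (rule closure_of_subset)
  then show ?thesis
    using long_pipe_closure[OF assms(1) \<open>a < b\<close>] by blast
qed simp

text \<open>Each stage of a long pipe is separable, being homeomorphic to a half-open cylinder; so in an
  \<open>\<omega>\<close>-bounded space its closure is compact.\<close>
lemma long_pipe_stage_closure_compact:
  assumes ob: "omega_bounded X" and P: "long_pipe X P U"
  shows "compactin X (X closure_of (U a))"
proof (rule omega_bounded_separable_closure_compact[OF ob])
  show "U a \<subseteq> topspace X"
    using long_pipe_union[OF P] long_pipe_subset[OF P] by auto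
  have "separable_space (prod_topology (top_of_set S1) (top_of_set {0::real..}))"
    unfolding prod_topology_subtopology_eu
    by (intro second_countable_imp_separable_space second_countable_subtopology second_countable_euclidean)
  then show "separable_space (subtopology X (U a))"
    using homeomorphic_separable_space[OF long_pipe_collar[OF P]] by blast
qed

locale nyikos_surface =
  fixes F :: "'a topology" and K :: "'a set" and n :: nat
    and P :: "nat \<Rightarrow> 'a set" and U :: "nat \<Rightarrow> 'w::wellorder \<Rightarrow> 'a set"
  assumes surface: "surface F" and decomp: "nyikos_decomp F K n P U"
begin

lemma core_subset: "K \<subseteq> topspace F"
  and covered: "topspace F = K \<union> (\<Union>i\<in>{1..n}. P i)"
  and core_compact: "compact_space (subtopology F K)"
  and core_surface: "surface_wb (subtopology F K)"
  and finite_core_boundary_components: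
    "finite (connected_components_of (subtopology F (mbdry (subtopology F K))))"
  and card_core_boundary_components:
    "card (connected_components_of (subtopology F (mbdry (subtopology F K)))) = n"
  and pipe: "i \<in> {1..n} \<Longrightarrow> long_pipe F (P i) (U i)"
  and pipe_meets_core: "i \<in> {1..n} \<Longrightarrow> P i \<inter> K = mbdry (subtopology F (P i))"
  and pipe_boundary_component: "i \<in> {1..n} \<Longrightarrow>
    mbdry (subtopology F (P i)) \<in> connected_components_of (subtopology F (mbdry (subtopology F K)))"
  and pipe_boundaries_distinct: "inj_on (\<lambda>i. mbdry (subtopology F (P i))) {1..n}"
  using decomp unfolding nyikos_decomp_def by blast+

text \<open>The pipes are attached along distinct boundary circles of the core, and there are as many
  pipes as circles; hence every boundary point of the core lies on the boundary of some pipe.\<close>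
lemma core_boundary_eq: "mbdry (subtopology F K) = (\<Union>i\<in>{1..n}. mbdry (subtopology F (P i)))"
proof -
  let ?\<C> = "connected_components_of (subtopology F (mbdry (subtopology F K)))"
  have "(\<lambda>i. mbdry (subtopology F (P i))) ` {1..n} \<subseteq> ?\<C>"
    using pipe_boundary_component by blast
  moreover have "card ((\<lambda>i. mbdry (subtopology F (P i))) ` {1..n}) = card ?\<C>"
    using card_image[OF pipe_boundaries_distinct] card_core_boundary_components by simp
  ultimately have "(\<lambda>i. mbdry (subtopology F (P i))) ` {1..n} = ?\<C>"
    using card_subset_eq[OF finite_core_boundary_components] by blast
  moreover have "\<Union>?\<C> = mbdry (subtopology F K)"
    using core_subset unfolding Union_connected_components_of by (auto simp: mbdry_def)
  ultimately show ?thesis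
    by simp
qed

text \<open>Each stage \<open>K \<union> U\<^sub>1 b \<union> \<dots> \<union> U\<^sub>n b\<close> is open: interior points of the core or of a pipe by
  invariance of domain, seam points by the seam lemma.\<close>
lemma stage_open: "openin F (K \<union> (\<Union>i\<in>{1..n}. U i b))"
proof (subst openin_subopen, intro ballI)
  fix x
  assume x: "x \<in> K \<union> (\<Union>i\<in>{1..n}. U i b)"
  consider (seam) i where "i \<in> {1..n}" "x \<in> mbdry (subtopology F (P i))"
    | (core) "x \<in> K" "x \<notin> mbdry (subtopology F K)"
    | (interior) i where "i \<in> {1..n}" "x \<in> U i b" "x \<notin> mbdry (subtopology F (P i))"
  proof (cases "x \<in> K")
    case True
    then show thesis
      using that(1,2) core_boundary_eq by blast
  next
    case False
    then obtain i where "i \<in> {1..n}" "x \<in> U i b"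
      using x by blast
    then show thesis
      using that(1,3) by blast
  qed
  then show "\<exists>T. openin F T \<and> x \<in> T \<and> T \<subseteq> K \<union> (\<Union>i\<in>{1..n}. U i b)"
  proof cases
    case (seam i)
    note Pi = pipe[OF seam(1)]
    have "mbdry (subtopology F (P i)) \<subseteq> mbdry (subtopology F K)"
      using core_boundary_eq seam(1) by blast
    moreover have "x \<in> U i b"
      using long_pipe_boundary[OF Pi] seam(2) by blast
    ultimately have "\<exists>T. openin F T \<and> x \<in> T \<and> T \<subseteq> K \<union> U i b"
      by (rule boundary_point_neighbourhood[OF surface core_subset long_pipe_subset[OF Pi]
          core_surface long_pipe_surface[OF Pi] pipe_meets_core[OF seam(1)] _ long_pipe_open[OF Pi] seam(2)])
    then show ?thesis
      using seam(1) by blast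
  next
    case core
    then have "\<exists>T. openin F T \<and> x \<in> T \<and> T \<subseteq> K"
      by (rule subsurface_interior_open[OF surface core_subset])
    then show ?thesis
      by blast
  next
    case (interior i)
    note Pi = pipe[OF interior(1)]
    have "x \<in> P i"
      using interior(2) long_pipe_union[OF Pi] by blast
    then obtain W where W: "openin F W" "x \<in> W" "W \<subseteq> P i"
      using subsurface_interior_open[OF surface long_pipe_subset[OF Pi] _ interior(3)] by blast
    obtain Ob where Ob: "openin F Ob" "U i b = Ob \<inter> P i"
      using long_pipe_open[OF Pi] unfolding openin_subtopology by blast
    have "W \<inter> Ob \<subseteq> U i b"
      using W(3) Ob(2) by blast
    then have "W \<inter> Ob \<subseteq> K \<union> (\<Union>i\<in>{1..n}. U i b)"
      using interior(1) by blast
    moreover have "openin F (W \<inter> Ob)" "x \<in> W \<inter> Ob"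
      using W Ob interior(2) by auto
    ultimately show ?thesis
      by blast
  qed
qed

lemma stages_form_exhaustion:
  assumes "omega1_type TYPE('w)" and ob: "omega_bounded F"
  shows "omega1_exhaustion F K (\<lambda>b. \<Union>i\<in>{1..n}. U i b)"
proof
  show "omega1_type TYPE('w)"
    by fact
  show "openin F (K \<union> (\<Union>i\<in>{1..n}. U i b))" for b
    by (rule stage_open)
  show "(\<Union>i\<in>{1..n}. U i a) \<subseteq> (\<Union>i\<in>{1..n}. U i b)" if ab: "a \<le> b" for a b
  proof -
    have "U i a \<subseteq> U i b" if "i \<in> {1..n}" for i
      using long_pipe_mono[OF pipe[OF that] ab] .
    then show ?thesis
      by blast
  qed
  show "topspace F \<subseteq> (\<Union>b. K \<union> (\<Union>i\<in>{1..n}. U i b))"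
  proof
    fix x
    assume "x \<in> topspace F"
    then consider "x \<in> K" | i where "i \<in> {1..n}" "x \<in> P i"
      using covered by blast
    then show "x \<in> (\<Union>b. K \<union> (\<Union>i\<in>{1..n}. U i b))"
    proof cases
      case (2 i)
      then obtain a where "x \<in> U i a"
        using long_pipe_union[OF pipe[OF 2(1)]] by blast
      then show ?thesis
        using 2(1) by blast
    qed blast
  qed
  show "\<exists>C. compactin F C \<and> K \<union> (\<Union>i\<in>{1..n}. U i b) \<subseteq> C" for b
  proof (intro exI conjI)
    have "compactin F K"
      using core_subset core_compact compactin_subspace by blast
    moreover have "compactin F (\<Union>i\<in>{1..n}. F closure_of (U i b))"
      using long_pipe_stage_closure_compact[OF ob pipe] by (intro compactin_Union) auto
    ultimately show "compactin F (K \<union> (\<Union>i\<in>{1..n}. F closure_of (U i b)))"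
      by (rule compactin_Un)
    have "U i b \<subseteq> F closure_of (U i b)" if "i \<in> {1..n}" for i
      using long_pipe_union[OF pipe[OF that]] long_pipe_subset[OF pipe[OF that]]
      by (intro closure_of_subset) auto
    then show "K \<union> (\<Union>i\<in>{1..n}. U i b) \<subseteq> K \<union> (\<Union>i\<in>{1..n}. F closure_of (U i b))"
      by blast
  qed
qed

end

theorem corollary3p2:
  fixes F :: "'a topology" and K :: "'a set" and n :: nat
    and P :: "nat \<Rightarrow> 'a set" and U :: "nat \<Rightarrow> 'w::wellorder \<Rightarrow> 'a set"
    and H :: "'a \<times> real \<Rightarrow> 'a"
  assumes "omega1_type TYPE('w)"
    and "surface F" and "omega_bounded F"
    and "nyikos_decomp F K n P U"
    and "isotopy F H"
  shows "club {a::'w. \<forall>t\<in>{0..1}.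
            (\<lambda>x. H (x, t)) ` (K \<union> (\<Union>i\<in>{1..n}. \<Union>b\<in>{b. b < a}. U i b))
              = K \<union> (\<Union>i\<in>{1..n}. \<Union>b\<in>{b. b < a}. U i b)}"
proof -
  interpret nyikos_surface F K n P U
    using assms(2,4) by unfold_locales
  interpret omega1_exhaustion F K "\<lambda>b. \<Union>i\<in>{1..n}. U i b"
    using stages_form_exhaustion assms(1,3) by blast
  have "level K (\<lambda>b. \<Union>i\<in>{1..n}. U i b) a = K \<union> (\<Union>i\<in>{1..n}. \<Union>b\<in>{b. b < a}. U i b)" for a
    unfolding level_def by blast
  then show ?thesis
    using club_isotopy_invariant_levels[OF assms(5)] unfolding isotopy_invariant_def by simp
qed

end
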